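(* There exists a network $G$ with three sources $s_1,s_2,s_3$ and three terminals $t_1,t_2,t_3$ in which every source–terminal pair $(s_i,t_j)$ is connected by at least one directed path, but for every finite field $\mathbb{F}$ with $|\mathbb{F}|\ge 2$ there is no network code (linear or nonlinear, scalar) over $\mathbb{F}$ under which every terminal can recover $X_1+X_2+X_3$ with zero error.
   Context: A network is a finite directed acyclic graph (parallel edges allowed) in which every edge has unit capacity and carries one symbol of a finite field $\mathbb{F}$ per use. Sources are vertices with no incoming edges; source $s_i$ holds $X_i\in\mathbb{F}$, the $X_i$ independent and uniformly distributed. Terminals are vertices with no outgoing edges. A (scalar) network code assigns to each edge leaving a source $s_i$ a function of $X_i$, and to each edge leaving a non-source vertex $v$ a function of the symbols on the edges entering $v$, with values in $\mathbb{F}$. A terminal recovers a quantity with zero error if that quantity is a (deterministic) function of the symbols on the terminal's incoming edges, for all values of the sources. *)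

theory Defs
  imports "HOL-Algebra.Ring" "HOL-Library.FuncSet"
begin

text \<open>A network: vertex set V, edge set E (edges are identifiers, so parallel
edges are allowed), tail map tail and head map head.\<close>

definition edge_rel :: "nat set \<Rightarrow> (nat \<Rightarrow> nat) \<Rightarrow> (nat \<Rightarrow> nat) \<Rightarrow> (nat \<times> nat) set" where
  "edge_rel E tail head = {(tail e, head e) | e. e \<in> E}"

definition in_edges :: "nat set \<Rightarrow> (nat \<Rightarrow> nat) \<Rightarrow> nat \<Rightarrow> nat set" where
  "in_edges E head v = {e \<in> E. head e = v}"

definition is_network :: "nat set \<Rightarrow> nat set \<Rightarrow> (nat \<Rightarrow> nat) \<Rightarrow> (nat \<Rightarrow> nat) \<Rightarrow> bool" where
  "is_network V E tail head \<longleftrightarrow> finite V \<and> finite E \<and>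
     (\<forall>e\<in>E. tail e \<in> V \<and> head e \<in> V) \<and> acyclic (edge_rel E tail head)"

definition sources :: "nat set \<Rightarrow> nat set \<Rightarrow> (nat \<Rightarrow> nat) \<Rightarrow> nat set" where
  "sources V E head = {v \<in> V. in_edges E head v = {}}"

definition terminals :: "nat set \<Rightarrow> nat set \<Rightarrow> (nat \<Rightarrow> nat) \<Rightarrow> nat set" where
  "terminals V E tail = {v \<in> V. \<forall>e\<in>E. tail e \<noteq> v}"

definition src_vals :: "('a, 'b) ring_scheme \<Rightarrow> (nat \<Rightarrow> 'a) set" where
  "src_vals R = {1, 2, 3} \<rightarrow>\<^sub>E carrier R"

text \<open>A scalar network code, described by the global symbol y e x carried by edge e
when the source messages are x.\<close>

definition is_network_code ::
  "('a, 'b) ring_scheme \<Rightarrow> nat set \<Rightarrow> nat set \<Rightarrow> (nat \<Rightarrow> nat) \<Rightarrow> (nat \<Rightarrow> nat)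
     \<Rightarrow> (nat \<Rightarrow> nat) \<Rightarrow> (nat \<Rightarrow> (nat \<Rightarrow> 'a) \<Rightarrow> 'a) \<Rightarrow> bool" where
  "is_network_code R V E tail head src y \<longleftrightarrow>
     (\<forall>e\<in>E. \<forall>x\<in>src_vals R. y e x \<in> carrier R) \<and>
     (\<forall>e\<in>E. \<forall>i\<in>{1, 2, 3}. tail e = src i \<longrightarrow>
        (\<exists>g. \<forall>x\<in>src_vals R. y e x = g (x i))) \<and>
     (\<forall>e\<in>E. tail e \<notin> sources V E head \<longrightarrow>
        (\<exists>\<phi>. \<forall>x\<in>src_vals R. y e x = \<phi> (restrict (\<lambda>e'. y e' x) (in_edges E head (tail e)))))"

definition recovers_sum ::
  "('a, 'b) ring_scheme \<Rightarrow> nat set \<Rightarrow> (nat \<Rightarrow> nat) \<Rightarrow> (nat \<Rightarrow> (nat \<Rightarrow> 'a) \<Rightarrow> 'a) \<Rightarrow> nat \<Rightarrow> bool" where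
  "recovers_sum R E head y t \<longleftrightarrow>
     (\<exists>\<psi>. \<forall>x\<in>src_vals R.
        \<psi> (restrict (\<lambda>e. y e x) (in_edges E head t)) = x 1 \<oplus>\<^bsub>R\<^esub> x 2 \<oplus>\<^bsub>R\<^esub> x 3)"

end

theory Submission
  imports Defs
begin

text \<open>
  Edge 2 carries an encoding a(X1,X2), edge 8 an encoding b(X2,X3).  Terminal 8
  sees a(X1,X2) and X3, terminal 10 sees X1 and b(X2,X3), terminal 9 sees only
  a(X1,X2) and b(X2,X3).

  Terminals 8 and 10 force a(u,v) to determine u+v and b(v,w) to
  determine v+w.  Over a finite field a pigeonhole argument upgrades this: a
  can distinguish no more than |F| values, so a(u,v) depends ONLY on u+v, and
  likewise b(v,w) only on v+w.  Hence the inputs (1,-1,1) and (0,0,0) give the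
  same symbols at terminal 9 although their sums 1 and 0 differ.
\<close>

lemma finite_determination_converse:
  assumes fin: "finite K" and F_into: "F ` X \<subseteq> K" and \<sigma>_onto: "\<sigma> ` X = K"
    and determines: "\<And>x x'. x \<in> X \<Longrightarrow> x' \<in> X \<Longrightarrow> F x = F x' \<Longrightarrow> \<sigma> x = \<sigma> x'"
    and x: "x \<in> X" and x': "x' \<in> X" and same: "\<sigma> x = \<sigma> x'"
  shows "F x = F x'"
proof -
  define h where "h k = \<sigma> (inv_into X F k)" for k
  have h_F: "h (F z) = \<sigma> z" if "z \<in> X" for z
    unfolding h_def using that by (intro determines inv_into_into) (auto intro: f_inv_into_f)
  have "\<sigma> ` X = h ` (F ` X)" using h_F by (force simp: image_image)
  then have "card K \<le> card (F ` X)"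
    using \<sigma>_onto fin F_into by (metis card_image_le finite_subset)
  moreover have "card (F ` X) \<le> card K" using fin F_into by (rule card_mono)
  ultimately have "card (h ` (F ` X)) = card (F ` X)"
    using \<open>\<sigma> ` X = h ` (F ` X)\<close> \<sigma>_onto by simp
  then have "inj_on h (F ` X)"
    using fin F_into by (metis eq_card_imp_inj_on finite_subset)
  moreover have "h (F x) = h (F x')" using h_F x x' same by simp
  ultimately show ?thesis using x x' by (auto dest: inj_onD)
qed

lemma (in abelian_monoid) pair_encoding_depends_only_on_sum:
  assumes fin: "finite (carrier G)"
    and a_closed: "\<And>u v. u \<in> carrier G \<Longrightarrow> v \<in> carrier G \<Longrightarrow> a u v \<in> carrier G"
    and reveals_sum: "\<And>u v u' v'. u \<in> carrier G \<Longrightarrow> v \<in> carrier G \<Longrightarrow> u' \<in> carrier G \<Longrightarrow>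
        v' \<in> carrier G \<Longrightarrow> a u v = a u' v' \<Longrightarrow> u \<oplus> v = u' \<oplus> v'"
    and carrier: "u \<in> carrier G" "v \<in> carrier G" "u' \<in> carrier G" "v' \<in> carrier G"
    and same_sum: "u \<oplus> v = u' \<oplus> v'"
  shows "a u v = a u' v'"
proof -
  let ?X = "carrier G \<times> carrier G"
  have onto: "(\<lambda>(p, q). p \<oplus> q) ` ?X = carrier G"
  proof
    show "carrier G \<subseteq> (\<lambda>(p, q). p \<oplus> q) ` ?X"
    proof
      fix k assume "k \<in> carrier G"
      then show "k \<in> (\<lambda>(p, q). p \<oplus> q) ` ?X"
        by (intro image_eqI[where x = "(k, \<zero>)"]) simp_all
    qed
  qed auto
  have into: "(\<lambda>(p, q). a p q) ` ?X \<subseteq> carrier G" using a_closed by auto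
  have determines: "(\<lambda>(p, q). p \<oplus> q) z = (\<lambda>(p, q). p \<oplus> q) z'"
    if "z \<in> ?X" "z' \<in> ?X" "(\<lambda>(p, q). a p q) z = (\<lambda>(p, q). a p q) z'" for z z'
    using that by (cases z; cases z') (auto intro: reveals_sum)
  have "(\<lambda>(p, q). a p q) (u, v) = (\<lambda>(p, q). a p q) (u', v')"
    by (rule finite_determination_converse[OF fin into onto determines])
      (simp_all add: carrier same_sum)
  then show ?thesis by simp
qed

section \<open>The algebraic core\<close>

lemma (in field) no_three_way_sum_decoding:
  assumes fin: "finite (carrier R)"
    and a_closed: "\<And>u v. u \<in> carrier R \<Longrightarrow> v \<in> carrier R \<Longrightarrow> a u v \<in> carrier R"
    and b_closed: "\<And>v w. v \<in> carrier R \<Longrightarrow> w \<in> carrier R \<Longrightarrow> b v w \<in> carrier R"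
    and a_reveals: "\<And>u v u' v'. u \<in> carrier R \<Longrightarrow> v \<in> carrier R \<Longrightarrow> u' \<in> carrier R \<Longrightarrow>
        v' \<in> carrier R \<Longrightarrow> a u v = a u' v' \<Longrightarrow> u \<oplus> v = u' \<oplus> v'"
    and b_reveals: "\<And>v w v' w'. v \<in> carrier R \<Longrightarrow> w \<in> carrier R \<Longrightarrow> v' \<in> carrier R \<Longrightarrow>
        w' \<in> carrier R \<Longrightarrow> b v w = b v' w' \<Longrightarrow> v \<oplus> w = v' \<oplus> w'"
    and ab_reveal: "\<And>u v w u' v' w'. u \<in> carrier R \<Longrightarrow> v \<in> carrier R \<Longrightarrow> w \<in> carrier R \<Longrightarrow>
        u' \<in> carrier R \<Longrightarrow> v' \<in> carrier R \<Longrightarrow> w' \<in> carrier R \<Longrightarrow>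
        a u v = a u' v' \<Longrightarrow> b v w = b v' w' \<Longrightarrow> u \<oplus> v \<oplus> w = u' \<oplus> v' \<oplus> w'"
  shows False
proof -
  have cancel: "\<one> \<oplus> \<ominus> \<one> = \<zero>" "\<ominus> \<one> \<oplus> \<one> = \<zero>" by (simp_all add: r_neg l_neg)
  have "a \<one> (\<ominus> \<one>) = a \<zero> \<zero>"
    by (rule pair_encoding_depends_only_on_sum[OF fin a_closed a_reveals]) (simp_all add: cancel)
  moreover have "b (\<ominus> \<one>) \<one> = b \<zero> \<zero>"
    by (rule pair_encoding_depends_only_on_sum[OF fin b_closed b_reveals]) (simp_all add: cancel)
  ultimately have "\<one> \<oplus> \<ominus> \<one> \<oplus> \<one> = \<zero> \<oplus> \<zero> \<oplus> \<zero>"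
    by (intro ab_reveal) simp_all
  then show False by (simp add: cancel)
qed

section \<open>Locality of network codes\<close>

lemma source_edge_local:
  assumes "is_network_code R V E tail head src y" "e \<in> E" "i \<in> {1,2,3}" "tail e = src i"
    "x \<in> src_vals R" "x' \<in> src_vals R" "x i = x' i"
  shows "y e x = y e x'"
proof -
  from assms(1-4) obtain g where "\<forall>x\<in>src_vals R. y e x = g (x i)"
    unfolding is_network_code_def by blast
  with assms(5-7) show ?thesis by simp
qed

lemma inner_edge_local:
  assumes "is_network_code R V E tail head src y" "e \<in> E" "tail e \<notin> sources V E head"
    "x \<in> src_vals R" "x' \<in> src_vals R"
    "\<And>e'. e' \<in> in_edges E head (tail e) \<Longrightarrow> y e' x = y e' x'"
  shows "y e x = y e x'"
proof -
  from assms(1-3) obtain \<phi> where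
    \<phi>: "\<forall>x\<in>src_vals R. y e x = \<phi> (restrict (\<lambda>e'. y e' x) (in_edges E head (tail e)))"
    unfolding is_network_code_def by blast
  have "restrict (\<lambda>e'. y e' x) (in_edges E head (tail e))
      = restrict (\<lambda>e'. y e' x') (in_edges E head (tail e))"
    using assms(6) by (rule restrict_ext)
  with \<phi> assms(4,5) show ?thesis by simp
qed

lemma recovered_sum_local:
  assumes "recovers_sum R E head y t" "x \<in> src_vals R" "x' \<in> src_vals R"
    "\<And>e'. e' \<in> in_edges E head t \<Longrightarrow> y e' x = y e' x'"
  shows "x 1 \<oplus>\<^bsub>R\<^esub> x 2 \<oplus>\<^bsub>R\<^esub> x 3 = x' 1 \<oplus>\<^bsub>R\<^esub> x' 2 \<oplus>\<^bsub>R\<^esub> x' 3"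
proof -
  from assms(1) obtain \<psi> where \<psi>: "\<forall>x\<in>src_vals R.
      \<psi> (restrict (\<lambda>e. y e x) (in_edges E head t)) = x 1 \<oplus>\<^bsub>R\<^esub> x 2 \<oplus>\<^bsub>R\<^esub> x 3"
    unfolding recovers_sum_def by blast
  have "restrict (\<lambda>e'. y e' x) (in_edges E head t) = restrict (\<lambda>e'. y e' x') (in_edges E head t)"
    using assms(4) by (rule restrict_ext)
  with \<psi> assms(2,3) show ?thesis by metis
qed

definition msg :: "'a \<Rightarrow> 'a \<Rightarrow> 'a \<Rightarrow> nat \<Rightarrow> 'a" where
  "msg a b c = (\<lambda>i. if i = 1 then a else if i = 2 then b else if i = 3 then c else undefined)"

lemma msg_in_src_vals:
  "a \<in> carrier R \<Longrightarrow> b \<in> carrier R \<Longrightarrow> c \<in> carrier R \<Longrightarrow> msg a b c \<in> src_vals R"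
  by (auto simp: src_vals_def msg_def PiE_def extensional_def)

text \<open>The first component is stated for Suc 0, the simp normal form of 1::nat.\<close>

lemma msg_simps [simp]: "msg a b c (Suc 0) = a" "msg a b c 2 = b" "msg a b c 3 = c"
  by (auto simp: msg_def)

section \<open>The network\<close>

definition G_tail :: "nat \<Rightarrow> nat" where "G_tail e = [1,2,4,5,5,3,2,3,6,7,7,1] ! e"
definition G_head :: "nat \<Rightarrow> nat" where "G_head e = [4,4,5,8,9,8,6,6,7,9,10,10] ! e"
definition G_edges :: "nat set" where "G_edges = {0,1,2,3,4,5,6,7,8,9,10,11}"
definition G_vertices :: "nat set" where "G_vertices = {1,2,3,4,5,6,7,8,9,10}"

lemma G_edge_rel:
  "edge_rel G_edges G_tail G_head =
     {(1,4),(2,4),(4,5),(5,8),(5,9),(3,8),(2,6),(3,6),(6,7),(7,9),(7,10),(1,10)}"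
proof -
  have "edge_rel G_edges G_tail G_head = (\<lambda>e. (G_tail e, G_head e)) ` G_edges"
    by (auto simp: edge_rel_def)
  then show ?thesis by (simp add: G_edges_def G_tail_def G_head_def insert_commute)
qed

text \<open>Every edge goes from a smaller to a larger vertex, so the network is acyclic.\<close>

lemma G_is_network: "is_network G_vertices G_edges G_tail G_head"
proof -
  have "acyclic (edge_rel G_edges G_tail G_head)"
    by (rule acyclic_subset[OF wf_acyclic[OF wf_less]]) (auto simp: G_edge_rel)
  then show ?thesis
    by (auto simp: is_network_def G_vertices_def G_edges_def G_tail_def G_head_def)
qed

lemma G_in_edges:
  "in_edges G_edges G_head 4 = {0,1}" "in_edges G_edges G_head 5 = {2}"
  "in_edges G_edges G_head 6 = {6,7}" "in_edges G_edges G_head 7 = {8}"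
  "in_edges G_edges G_head 8 = {3,5}" "in_edges G_edges G_head 9 = {4,9}"
  "in_edges G_edges G_head 10 = {10,11}"
  by (auto simp: in_edges_def G_edges_def G_head_def)

lemma G_sources: "sources G_vertices G_edges G_head = {1,2,3}"
proof -
  have "sources G_vertices G_edges G_head = G_vertices - G_head ` G_edges"
    unfolding sources_def in_edges_def by blast
  also have "G_head ` G_edges = {4,5,6,7,8,9,10}"
    by (simp add: G_edges_def G_head_def insert_commute)
  finally show ?thesis by (simp add: G_vertices_def insert_Diff_if)
qed

lemma G_terminals: "terminals G_vertices G_edges G_tail = {8,9,10}"
proof -
  have "terminals G_vertices G_edges G_tail = G_vertices - G_tail ` G_edges"
    unfolding terminals_def by blast
  also have "G_tail ` G_edges = {1,2,3,4,5,6,7}"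
    by (simp add: G_edges_def G_tail_def insert_commute)
  finally show ?thesis by (simp add: G_vertices_def insert_Diff_if)
qed

text \<open>Every source reaches every terminal: X1 and X2 reach 5 via 4, X2 and X3
  reach 7 via 6; then 5 -> 8, 9 and 7 -> 9, 10, and the direct edges 3 -> 8 and
  1 -> 10 close the remaining cases.\<close>

lemma G_connected: "\<forall>i\<in>{1,2,3}. \<forall>t\<in>{8,9,10}. (i, t) \<in> (edge_rel G_edges G_tail G_head)\<^sup>+"
proof -
  let ?r = "edge_rel G_edges G_tail G_head"
  have to_5: "(1, 5) \<in> ?r\<^sup>+" "(2, 5) \<in> ?r\<^sup>+"
    by (rule trancl_into_trancl[OF r_into_trancl, where b = 4]; simp add: G_edge_rel)+
  have to_7: "(2, 7) \<in> ?r\<^sup>+" "(3, 7) \<in> ?r\<^sup>+"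
    by (rule trancl_into_trancl[OF r_into_trancl, where b = 6]; simp add: G_edge_rel)+
  have from_5: "(i, t) \<in> ?r\<^sup>+" if "(i, 5) \<in> ?r\<^sup>+" "t \<in> {8, 9}" for i t
    using that(1) by (rule trancl_into_trancl) (use that(2) in \<open>auto simp: G_edge_rel\<close>)
  have from_7: "(i, t) \<in> ?r\<^sup>+" if "(i, 7) \<in> ?r\<^sup>+" "t \<in> {9, 10}" for i t
    using that(1) by (rule trancl_into_trancl) (use that(2) in \<open>auto simp: G_edge_rel\<close>)
  have direct: "(3, 8) \<in> ?r\<^sup>+" "(1, 10) \<in> ?r\<^sup>+"
    by (simp_all add: r_into_trancl' G_edge_rel)
  show ?thesis using to_5 to_7 direct by (auto intro: from_5 from_7)
qed

locale sum_code_on_G = field R for R (structure) +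
  fixes y :: "nat \<Rightarrow> (nat \<Rightarrow> 'a) \<Rightarrow> 'a"
  assumes code: "is_network_code R G_vertices G_edges G_tail G_head id y"
    and decodes: "\<And>t. t \<in> {8, 9, 10} \<Longrightarrow> recovers_sum R G_edges G_head y t"
begin

lemma symbol_closed: "e \<in> G_edges \<Longrightarrow> x \<in> src_vals R \<Longrightarrow> y e x \<in> carrier R"
  using code unfolding is_network_code_def by blast

lemma decodes_at: "recovers_sum R G_edges G_head y 8" "recovers_sum R G_edges G_head y 9"
    "recovers_sum R G_edges G_head y 10"
  by (rule decodes, simp)+

lemma source_symbol:
  assumes "x \<in> src_vals R" "x' \<in> src_vals R" "e \<in> G_edges" "G_tail e = i" "i \<in> {1, 2, 3}"
    "x i = x' i"
  shows "y e x = y e x'"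
  by (rule source_edge_local[OF code assms(3,5) _ assms(1,2,6)]) (simp add: assms(4))

lemma relay_symbol:
  assumes x: "x \<in> src_vals R" "x' \<in> src_vals R" and "e \<in> G_edges" "G_tail e = v" "v \<in> {4, 5, 6, 7}"
    and inputs_agree: "\<And>e'. e' \<in> in_edges G_edges G_head v \<Longrightarrow> y e' x = y e' x'"
  shows "y e x = y e x'"
proof (rule inner_edge_local[OF code \<open>e \<in> G_edges\<close> _ x])
  show "G_tail e \<notin> sources G_vertices G_edges G_head"
    using \<open>G_tail e = v\<close> \<open>v \<in> {4, 5, 6, 7}\<close> by (auto simp: G_sources)
  show "y e' x = y e' x'" if "e' \<in> in_edges G_edges G_head (G_tail e)" for e'
    using that \<open>G_tail e = v\<close> inputs_agree by simp
qed

text \<open>Edge 2 (4 -> 5) is computed from the source edges 0 and 1, so it only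
  depends on X1, X2; symmetrically edge 8 (6 -> 7) only depends on X2, X3.\<close>

lemma edge_2_local:
  assumes x: "x \<in> src_vals R" "x' \<in> src_vals R" and same: "x 1 = x' 1" "x 2 = x' 2"
  shows "y 2 x = y 2 x'"
proof (rule relay_symbol[OF x, of 2 4])
  have "y 0 x = y 0 x'"
    by (rule source_symbol[OF x, of 0 1]) (use same in \<open>simp_all add: G_edges_def G_tail_def\<close>)
  moreover have "y 1 x = y 1 x'"
    by (rule source_symbol[OF x, of 1 2]) (use same in \<open>simp_all add: G_edges_def G_tail_def\<close>)
  ultimately show "y e' x = y e' x'" if "e' \<in> in_edges G_edges G_head 4" for e'
    using that by (auto simp: G_in_edges)
qed (simp_all add: G_edges_def G_tail_def)

lemma edge_8_local:
  assumes x: "x \<in> src_vals R" "x' \<in> src_vals R" and same: "x 2 = x' 2" "x 3 = x' 3"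
  shows "y 8 x = y 8 x'"
proof (rule relay_symbol[OF x, of 8 6])
  have "y 6 x = y 6 x'"
    by (rule source_symbol[OF x, of 6 2]) (use same in \<open>simp_all add: G_edges_def G_tail_def\<close>)
  moreover have "y 7 x = y 7 x'"
    by (rule source_symbol[OF x, of 7 3]) (use same in \<open>simp_all add: G_edges_def G_tail_def\<close>)
  ultimately show "y e' x = y e' x'" if "e' \<in> in_edges G_edges G_head 6" for e'
    using that by (auto simp: G_in_edges)
qed (simp_all add: G_edges_def G_tail_def)

lemma relays_of_edge_2:
  assumes x: "x \<in> src_vals R" "x' \<in> src_vals R" and same: "y 2 x = y 2 x'" and e: "e \<in> {3, 4}"
  shows "y e x = y e x'"
proof (rule relay_symbol[OF x, of e 5])
  show "e \<in> G_edges" "G_tail e = 5" using e by (auto simp: G_edges_def G_tail_def)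
  show "y e' x = y e' x'" if "e' \<in> in_edges G_edges G_head 5" for e'
    using that same by (simp add: G_in_edges)
qed simp

lemma relays_of_edge_8:
  assumes x: "x \<in> src_vals R" "x' \<in> src_vals R" and same: "y 8 x = y 8 x'" and e: "e \<in> {9, 10}"
  shows "y e x = y e x'"
proof (rule relay_symbol[OF x, of e 7])
  show "e \<in> G_edges" "G_tail e = 7" using e by (auto simp: G_edges_def G_tail_def)
  show "y e' x = y e' x'" if "e' \<in> in_edges G_edges G_head 7" for e'
    using that same by (simp add: G_in_edges)
qed simp

lemma terminal_8_sum:
  assumes x: "x \<in> src_vals R" "x' \<in> src_vals R" and same: "y 2 x = y 2 x'" "x 3 = x' 3"
  shows "x 1 \<oplus> x 2 \<oplus> x 3 = x' 1 \<oplus> x' 2 \<oplus> x' 3"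
proof (rule recovered_sum_local[OF decodes_at(1) x])
  have "y 3 x = y 3 x'" by (rule relays_of_edge_2[OF x same(1)]) simp
  moreover have "y 5 x = y 5 x'"
    by (rule source_symbol[OF x, of 5 3]) (use same in \<open>simp_all add: G_edges_def G_tail_def\<close>)
  ultimately show "y e' x = y e' x'" if "e' \<in> in_edges G_edges G_head 8" for e'
    using that by (auto simp: G_in_edges)
qed

lemma terminal_9_sum:
  assumes x: "x \<in> src_vals R" "x' \<in> src_vals R" and same: "y 2 x = y 2 x'" "y 8 x = y 8 x'"
  shows "x 1 \<oplus> x 2 \<oplus> x 3 = x' 1 \<oplus> x' 2 \<oplus> x' 3"
proof (rule recovered_sum_local[OF decodes_at(2) x])
  have "y 4 x = y 4 x'" "y 9 x = y 9 x'"
    using relays_of_edge_2[OF x same(1)] relays_of_edge_8[OF x same(2)] by simp_all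
  then show "y e' x = y e' x'" if "e' \<in> in_edges G_edges G_head 9" for e'
    using that by (auto simp: G_in_edges)
qed

lemma terminal_10_sum:
  assumes x: "x \<in> src_vals R" "x' \<in> src_vals R" and same: "y 8 x = y 8 x'" "x 1 = x' 1"
  shows "x 1 \<oplus> x 2 \<oplus> x 3 = x' 1 \<oplus> x' 2 \<oplus> x' 3"
proof (rule recovered_sum_local[OF decodes_at(3) x])
  have "y 10 x = y 10 x'" by (rule relays_of_edge_8[OF x same(1)]) simp
  moreover have "y 11 x = y 11 x'"
    by (rule source_symbol[OF x, of 11 1]) (use same in \<open>simp_all add: G_edges_def G_tail_def\<close>)
  ultimately show "y e' x = y e' x'" if "e' \<in> in_edges G_edges G_head 10" for e'
    using that by (auto simp: G_in_edges)
qed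

definition enc_a :: "'a \<Rightarrow> 'a \<Rightarrow> 'a" where "enc_a u v = y 2 (msg u v \<zero>)"
definition enc_b :: "'a \<Rightarrow> 'a \<Rightarrow> 'a" where "enc_b v w = y 8 (msg \<zero> v w)"

lemma edge_2_is_enc_a:
  "u \<in> carrier R \<Longrightarrow> v \<in> carrier R \<Longrightarrow> w \<in> carrier R \<Longrightarrow> y 2 (msg u v w) = enc_a u v"
  unfolding enc_a_def by (rule edge_2_local) (simp_all add: msg_in_src_vals)

lemma edge_8_is_enc_b:
  "u \<in> carrier R \<Longrightarrow> v \<in> carrier R \<Longrightarrow> w \<in> carrier R \<Longrightarrow> y 8 (msg u v w) = enc_b v w"
  unfolding enc_b_def by (rule edge_8_local) (simp_all add: msg_in_src_vals)

theorem no_code_over_finite_field: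
  assumes fin: "finite (carrier R)"
  shows False
proof (rule no_three_way_sum_decoding[OF fin, of enc_a enc_b])
  fix u v assume "u \<in> carrier R" "v \<in> carrier R"
  then show "enc_a u v \<in> carrier R" "enc_b u v \<in> carrier R"
    unfolding enc_a_def enc_b_def by (simp_all add: symbol_closed G_edges_def msg_in_src_vals)
next
  fix u v u' v' assume car: "u \<in> carrier R" "v \<in> carrier R" "u' \<in> carrier R" "v' \<in> carrier R"
  show "u \<oplus> v = u' \<oplus> v'" if "enc_a u v = enc_a u' v'"
    using terminal_8_sum[of "msg u v \<zero>" "msg u' v' \<zero>"] that car
    by (simp add: enc_a_def msg_in_src_vals)
  show "u \<oplus> v = u' \<oplus> v'" if "enc_b u v = enc_b u' v'"
    using terminal_10_sum[of "msg \<zero> u v" "msg \<zero> u' v'"] that car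
    by (simp add: enc_b_def msg_in_src_vals)
next
  fix u v w u' v' w'
  assume car: "u \<in> carrier R" "v \<in> carrier R" "w \<in> carrier R"
    "u' \<in> carrier R" "v' \<in> carrier R" "w' \<in> carrier R"
    and "enc_a u v = enc_a u' v'" "enc_b v w = enc_b v' w'"
  then show "u \<oplus> v \<oplus> w = u' \<oplus> v' \<oplus> w'"
    using terminal_9_sum[of "msg u v w" "msg u' v' w'"]
    by (simp add: edge_2_is_enc_a edge_8_is_enc_b msg_in_src_vals)
qed

end

theorem mainTheorem5:
  shows "\<exists>(V :: nat set) (E :: nat set) (tail :: nat \<Rightarrow> nat) (head :: nat \<Rightarrow> nat)
            (src :: nat \<Rightarrow> nat) (T :: nat set).
    is_network V E tail head \<and>
    inj_on src {1, 2, 3} \<and> sources V E head = src ` {1, 2, 3} \<and>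
    card T = 3 \<and> terminals V E tail = T \<and>
    (\<forall>i\<in>{1, 2, 3}. \<forall>t\<in>T. (src i, t) \<in> (edge_rel E tail head)\<^sup>+) \<and>
    (\<forall>R :: nat ring. field R \<and> finite (carrier R) \<longrightarrow>
       \<not> (\<exists>y. is_network_code R V E tail head src y \<and> (\<forall>t\<in>T. recovers_sum R E head y t)))"
proof (intro exI conjI)
  show "is_network G_vertices G_edges G_tail G_head" by (rule G_is_network)
  show "inj_on id {1, 2, 3::nat}" by simp
  show "sources G_vertices G_edges G_head = id ` {1, 2, 3}" by (simp add: G_sources)
  show "card {8, 9, 10::nat} = 3" by simp
  show "terminals G_vertices G_edges G_tail = {8, 9, 10}" by (rule G_terminals)
  show "\<forall>i\<in>{1, 2, 3}. \<forall>t\<in>{8, 9, 10}. (id i, t) \<in> (edge_rel G_edges G_tail G_head)\<^sup>+"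
    using G_connected by simp
  show "\<forall>R :: nat ring. field R \<and> finite (carrier R) \<longrightarrow> \<not> (\<exists>y.
      is_network_code R G_vertices G_edges G_tail G_head id y \<and>
      (\<forall>t\<in>{8, 9, 10}. recovers_sum R G_edges G_head y t))"
  proof (intro allI impI notI)
    fix R :: "nat ring"
    assume "field R \<and> finite (carrier R)"
      and "\<exists>y. is_network_code R G_vertices G_edges G_tail G_head id y \<and>
        (\<forall>t\<in>{8, 9, 10}. recovers_sum R G_edges G_head y t)"
    then obtain y where "sum_code_on_G R y" and "finite (carrier R)"
      by (auto simp: sum_code_on_G_def sum_code_on_G_axioms_def)
    then show False by (rule sum_code_on_G.no_code_over_finite_field)
  qed
qed

end
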